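(* Let $c,d\in\mathbb{N}$, $I=\mathbb{N}^d\times[c]$, and let $L\subseteq\mathbb{Z}^{(I)}$ be a $\mathrm{Sym}$-invariant lattice. Identify $\mathbb{Z}^{(\mathbb{N}^d\times[2c])}$ with $\mathbb{Z}^{(I)}\oplus\mathbb{Z}^{(I)}$ (basis vectors $\mathbf{e}_{\mathbf{i},j}$ with $j\le c$ spanning the first summand and $\mathbf{e}_{\mathbf{i},c+j}$ corresponding to $\mathbf{e}_{\mathbf{i},j}$ in the second summand), let $\varphi:\mathbb{Z}^{(\mathbb{N}^d\times[2c])}\to\mathbb{Z}^{(I)}$, $(\mathbf{u},\mathbf{v})\mapsto\mathbf{u}-\mathbf{v}$, and $M=\varphi^{-1}(L)\cap\mathbb{Z}_{\ge0}^{(\mathbb{N}^d\times[2c])}$. Then $M$ has a finite equivariant Hilbert basis if and only if $L$ has a finite equivariant Graver basis.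
   Context: $\mathbb{N}=\{1,2,\dots\}$. $\mathbb{Z}^{(J)}$ is the free abelian group with basis $J$, $\mathbb{Z}_{\ge0}^{(J)}$ its nonnegative vectors; lattice = subgroup. $\mathrm{Sym}$ is the group of permutations of $\mathbb{N}$ fixing all but finitely many points; it acts on $\mathbb{Z}^{(\mathbb{N}^d\times[k])}$ (any $k$) by linear extension of $\sigma(\mathbf{e}_{(i_1,\dots,i_d),j})=\mathbf{e}_{(\sigma(i_1),\dots,\sigma(i_d)),j}$. $\mathbf{u}\sqsubseteq\mathbf{v}$ iff $u_iv_i\ge0$ and $|u_i|\le|v_i|$ for all $i$; the Graver basis of $L$ is the set of $\sqsubseteq$-minimal elements of $L\setminus\{\mathbf{0}\}$; $\mathcal{G}$ is an equivariant Graver basis if $\mathrm{Sym}(\mathcal{G})=\{\sigma(\mathbf{g})\}$ is the Graver basis. A Hilbert basis of a monoid is a minimal generating set w.r.t. $\mathbb{Z}_{\ge0}$-combinations; $\mathcal{H}$ is an equivariant Hilbert basis of a $\mathrm{Sym}$-invariant monoid $M$ if $\mathrm{Sym}(\mathcal{H})$ is a Hilbert basis of $M$. *)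

theory Defs
  imports Main "HOL-Library.Function_Algebras"
begin

text \<open>Indices: a d-tuple of positive naturals (a list of length d) and a colour j in [k] = {1..k}.\<close>

type_synonym idx = "nat list \<times> nat"
type_synonym vec = "idx \<Rightarrow> int"

definition Idx :: "nat \<Rightarrow> nat \<Rightarrow> idx set" where
  "Idx d k = {(is, j). length is = d \<and> (\<forall>i\<in>set is. 1 \<le> i) \<and> 1 \<le> j \<and> j \<le> k}"

definition Vec :: "nat \<Rightarrow> nat \<Rightarrow> vec set" where
  "Vec d k = {u. finite {x. u x \<noteq> 0} \<and> (\<forall>x. u x \<noteq> 0 \<longrightarrow> x \<in> Idx d k)}"

text \<open>Sym: permutations of N = {1,2,...} fixing all but finitely many points
  (as functions on nat, fixing 0).\<close>
definition Sym :: "(nat \<Rightarrow> nat) set" where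
  "Sym = {\<sigma>. bij \<sigma> \<and> \<sigma> 0 = 0 \<and> finite {i. \<sigma> i \<noteq> i}}"

text \<open>Linear extension of sigma(e_{(i1..id),j}) = e_{(sigma i1,..,sigma id),j}.\<close>
definition act :: "(nat \<Rightarrow> nat) \<Rightarrow> vec \<Rightarrow> vec" where
  "act \<sigma> u = (\<lambda>(is, j). u (map (inv \<sigma>) is, j))"

definition orbit :: "vec set \<Rightarrow> vec set" where
  "orbit G = {act \<sigma> g | \<sigma> g. \<sigma> \<in> Sym \<and> g \<in> G}"

definition lattice :: "nat \<Rightarrow> nat \<Rightarrow> vec set \<Rightarrow> bool" where
  "lattice d k L \<longleftrightarrow> L \<subseteq> Vec d k \<and> (\<lambda>_. 0) \<in> L \<and>
     (\<forall>u\<in>L. \<forall>v\<in>L. u + v \<in> L) \<and> (\<forall>u\<in>L. - u \<in> L)"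

definition sym_invariant :: "vec set \<Rightarrow> bool" where
  "sym_invariant L \<longleftrightarrow> (\<forall>\<sigma>\<in>Sym. \<forall>u\<in>L. act \<sigma> u \<in> L)"

definition conf_le :: "vec \<Rightarrow> vec \<Rightarrow> bool" (infix "\<sqsubseteq>" 50) where
  "u \<sqsubseteq> v \<longleftrightarrow> (\<forall>x. u x * v x \<ge> 0 \<and> \<bar>u x\<bar> \<le> \<bar>v x\<bar>)"

definition graver_basis :: "vec set \<Rightarrow> vec set" where
  "graver_basis L = {u \<in> L - {\<lambda>_. 0}. \<forall>v \<in> L - {\<lambda>_. 0}. v \<sqsubseteq> u \<longrightarrow> v = u}"

definition equivariant_graver_basis :: "vec set \<Rightarrow> vec set \<Rightarrow> bool" where
  "equivariant_graver_basis G L \<longleftrightarrow> orbit G = graver_basis L"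

inductive_set monoid_gen :: "vec set \<Rightarrow> vec set" for H where
  zero: "(\<lambda>_. 0) \<in> monoid_gen H"
| gen: "h \<in> H \<Longrightarrow> h \<in> monoid_gen H"
| add: "a \<in> monoid_gen H \<Longrightarrow> b \<in> monoid_gen H \<Longrightarrow> a + b \<in> monoid_gen H"

definition hilbert_basis :: "vec set \<Rightarrow> vec set \<Rightarrow> bool" where
  "hilbert_basis H M \<longleftrightarrow> monoid_gen H = M \<and> (\<forall>H'. H' \<subset> H \<longrightarrow> monoid_gen H' \<noteq> M)"

definition equivariant_hilbert_basis :: "vec set \<Rightarrow> vec set \<Rightarrow> bool" where
  "equivariant_hilbert_basis H M \<longleftrightarrow> hilbert_basis (orbit H) M"

definition phi :: "nat \<Rightarrow> vec \<Rightarrow> vec" where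
  "phi c w = (\<lambda>(is, j). if 1 \<le> j \<and> j \<le> c then w (is, j) - w (is, j + c) else 0)"

definition Mon :: "nat \<Rightarrow> nat \<Rightarrow> vec set \<Rightarrow> vec set" where
  "Mon d c L = {w \<in> Vec d (2 * c). (\<forall>x. 0 \<le> w x) \<and> phi c w \<in> L}"

end

theory Submission
  imports Defs
begin

(* Since M is a positive monoid, its unique Hilbert basis is its set of irreducible elements.
   An irreducible w of M with phi w \<noteq> 0 has disjoint supports in the two summands, so
   w = (g\<^sup>+, g\<^sup>-) for g = phi w, and the irreducibility of w is exactly the conformal
   minimality of g; an irreducible w with phi w = 0 is a diagonal element (e_x, e_x).
   Both phi and g \<mapsto> (g\<^sup>+, g\<^sup>-) commute with Sym, so orbit representatives transfer
   between the two bases. The diagonal elements contribute only finitely many orbits, because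
   Sym moves every index into {1..d}^d \<times> [c]. *)

section \<open>Finitary permutations and their action\<close>

lemma Sym_bij: "\<sigma> \<in> Sym \<Longrightarrow> bij \<sigma>"
  by (simp add: Sym_def)

lemma Sym_comp:
  assumes "\<sigma> \<in> Sym" and "\<tau> \<in> Sym"
  shows "\<sigma> \<circ> \<tau> \<in> Sym"
proof -
  have "{i. (\<sigma> \<circ> \<tau>) i \<noteq> i} \<subseteq> {i. \<sigma> i \<noteq> i} \<union> {i. \<tau> i \<noteq> i}"
    by auto
  then show ?thesis
    using assms unfolding Sym_def by (auto intro: bij_comp finite_subset)
qed

lemma Sym_inv:
  assumes "\<sigma> \<in> Sym"
  shows "inv \<sigma> \<in> Sym"
proof -
  have \<sigma>: "bij \<sigma>" "\<sigma> 0 = 0" "finite {i. \<sigma> i \<noteq> i}"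
    using assms by (auto simp: Sym_def)
  have "{i. inv \<sigma> i \<noteq> i} \<subseteq> \<sigma> ` {i. \<sigma> i \<noteq> i}"
  proof
    fix i
    assume "i \<in> {i. inv \<sigma> i \<noteq> i}"
    moreover have "\<sigma> (inv \<sigma> i) = i"
      using \<sigma>(1) by (simp add: bij_is_surj surj_f_inv_f)
    ultimately show "i \<in> \<sigma> ` {i. \<sigma> i \<noteq> i}"
      by (metis (mono_tags, lifting) imageI mem_Collect_eq)
  qed
  then have "finite {i. inv \<sigma> i \<noteq> i}"
    using \<sigma>(3) by (rule finite_subset[OF _ finite_imageI])
  moreover have "inv \<sigma> 0 = 0"
    using \<sigma> by (metis bij_is_inj inv_f_f)
  ultimately show ?thesis
    using \<sigma>(1) by (simp add: Sym_def bij_imp_bij_inv)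
qed

lemma Sym_swap:
  assumes "a \<noteq> 0" and "b \<noteq> 0"
  shows "id(a := b, b := a) \<in> Sym"
proof -
  let ?\<tau> = "id(a := b, b := a)"
  have "?\<tau> \<circ> ?\<tau> = id"
    by (auto simp: fun_eq_iff)
  then have "bij ?\<tau>"
    using o_bij by blast
  moreover have "{i. ?\<tau> i \<noteq> i} \<subseteq> {a, b}"
    by auto
  ultimately show ?thesis
    using assms unfolding Sym_def by (auto intro: finite_subset)
qed

lemma Sym_pos:
  assumes "\<sigma> \<in> Sym" and "1 \<le> i"
  shows "1 \<le> \<sigma> i"
proof -
  have "inj \<sigma>" "\<sigma> 0 = 0"
    using assms(1) by (auto simp: Sym_def bij_is_inj)
  then have "\<sigma> i \<noteq> 0"
    using assms(2) by (metis injD not_one_le_zero)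
  then show ?thesis
    by simp
qed

lemma Sym_move_into_interval:
  "\<forall>i\<in>set xs. 1 \<le> i \<Longrightarrow> \<exists>\<sigma>\<in>Sym. \<sigma> ` set xs \<subseteq> {1..length xs}"
proof (induction xs)
  case Nil
  have "id \<in> Sym"
    by (simp add: Sym_def)
  then show ?case
    by auto
next
  case (Cons a xs)
  then obtain \<sigma> where \<sigma>: "\<sigma> \<in> Sym" "\<sigma> ` set xs \<subseteq> {1..length xs}"
    by auto
  show ?case
  proof (cases "\<sigma> a \<in> \<sigma> ` set xs")
    case True
    then show ?thesis
      using \<sigma> by (intro bexI[of _ \<sigma>]) auto
  next
    case False
    let ?\<tau> = "id(\<sigma> a := Suc (length xs), Suc (length xs) := \<sigma> a)"
    have "1 \<le> \<sigma> a"
      using Sym_pos[OF \<sigma>(1)] Cons.prems by simp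
    then have "?\<tau> \<circ> \<sigma> \<in> Sym"
      by (intro Sym_comp[OF Sym_swap \<sigma>(1)]) auto
    moreover have "?\<tau> (\<sigma> y) = \<sigma> y" if "y \<in> set xs" for y
      using that False \<sigma>(2) by (auto simp: image_subset_iff) (metis imageI)
    ultimately show ?thesis
      using \<sigma>(2) by (intro bexI[of _ "?\<tau> \<circ> \<sigma>"]) auto
  qed
qed

lemma act_add: "act \<sigma> (u + v) = act \<sigma> u + act \<sigma> v"
  by (auto simp: act_def fun_eq_iff)

lemma act_zero: "act \<sigma> 0 = 0"
  by (auto simp: act_def fun_eq_iff)

lemma act_inv_act: "\<sigma> \<in> Sym \<Longrightarrow> act (inv \<sigma>) (act \<sigma> w) = w"
  by (auto simp: act_def fun_eq_iff inv_inv_eq Sym_bij bij_is_inj)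

lemma act_eq_0_iff: "\<sigma> \<in> Sym \<Longrightarrow> act \<sigma> w = 0 \<longleftrightarrow> w = 0"
  by (metis act_inv_act act_zero)

lemma act_in_Vec:
  assumes "\<sigma> \<in> Sym" and "w \<in> Vec d k"
  shows "act \<sigma> w \<in> Vec d k"
proof -
  have surj: "\<sigma> \<circ> inv \<sigma> = id"
    using Sym_bij[OF assms(1)] by (simp add: bij_is_surj flip: surj_iff)
  have "{x. act \<sigma> w x \<noteq> 0} \<subseteq> (\<lambda>(xs, j). (map \<sigma> xs, j)) ` {x. w x \<noteq> 0}"
  proof
    fix x
    assume "x \<in> {x. act \<sigma> w x \<noteq> 0}"
    then show "x \<in> (\<lambda>(xs, j). (map \<sigma> xs, j)) ` {x. w x \<noteq> 0}"
      by (intro image_eqI[of _ _ "(map (inv \<sigma>) (fst x), snd x)"])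
        (auto simp: act_def surj split: prod.splits)
  qed
  moreover have "finite {x. w x \<noteq> 0}"
    using assms(2) by (simp add: Vec_def)
  ultimately have "finite {x. act \<sigma> w x \<noteq> 0}"
    by (rule finite_subset[OF _ finite_imageI])
  moreover have "x \<in> Idx d k" if nz: "act \<sigma> w x \<noteq> 0" for x
  proof -
    obtain xs j where x: "x = (xs, j)" and "(map (inv \<sigma>) xs, j) \<in> Idx d k"
      using nz assms(2) by (cases x) (auto simp: act_def Vec_def)
    moreover have "inv \<sigma> 0 = 0"
      using Sym_inv[OF assms(1)] by (simp add: Sym_def)
    ultimately show ?thesis
      by (auto simp: Idx_def Suc_le_eq) (metis gr0I)
  qed
  ultimately show ?thesis
    by (simp add: Vec_def)
qed

lemma phi_act: "phi c (act \<sigma> w) = act \<sigma> (phi c w)"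
  by (auto simp: act_def phi_def fun_eq_iff)

lemma orbit_Un: "orbit (A \<union> B) = orbit A \<union> orbit B"
  by (auto simp: orbit_def)

lemma orbit_image:
  assumes "\<And>\<sigma> x. \<sigma> \<in> Sym \<Longrightarrow> f (act \<sigma> x) = act \<sigma> (f x)"
  shows "orbit (f ` A) = f ` orbit A"
proof (intro equalityI subsetI)
  fix y
  assume "y \<in> orbit (f ` A)"
  then obtain \<sigma> a where "\<sigma> \<in> Sym" "a \<in> A" "y = act \<sigma> (f a)"
    by (auto simp: orbit_def)
  then have "y = f (act \<sigma> a)" "act \<sigma> a \<in> orbit A"
    by (auto simp: assms orbit_def)
  then show "y \<in> f ` orbit A"
    by blast
next
  fix y
  assume "y \<in> f ` orbit A"
  then obtain \<sigma> a where "\<sigma> \<in> Sym" "a \<in> A" "y = f (act \<sigma> a)"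
    by (auto simp: orbit_def)
  then have "y = act \<sigma> (f a)" "f a \<in> f ` A"
    by (auto simp: assms)
  then show "y \<in> orbit (f ` A)"
    using \<open>\<sigma> \<in> Sym\<close> by (auto simp: orbit_def)
qed

lemma orbit_Diff_zero: "orbit (A - {0}) = orbit A - {0}"
proof (intro equalityI subsetI)
  fix y
  assume "y \<in> orbit (A - {0})"
  then obtain \<sigma> a where "\<sigma> \<in> Sym" "a \<in> A" "a \<noteq> 0" "y = act \<sigma> a"
    by (auto simp: orbit_def)
  then show "y \<in> orbit A - {0}"
    by (auto simp: orbit_def act_eq_0_iff)
next
  fix y
  assume "y \<in> orbit A - {0}"
  then obtain \<sigma> a where "\<sigma> \<in> Sym" "a \<in> A" "y = act \<sigma> a" "y \<noteq> 0"
    by (auto simp: orbit_def)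
  moreover from this have "a \<noteq> 0"
    by (auto simp: act_zero)
  ultimately show "y \<in> orbit (A - {0})"
    unfolding orbit_def by blast
qed

section \<open>Hilbert bases of positive monoids\<close>

definition irreducibles :: "vec set \<Rightarrow> vec set" where
  "irreducibles M = {w \<in> M. w \<noteq> 0 \<and> (\<forall>a\<in>M. \<forall>b\<in>M. w = a + b \<longrightarrow> a = 0 \<or> b = 0)}"

lemma sym_invariant_irreducibles:
  assumes M: "sym_invariant M"
  shows "sym_invariant (irreducibles M)"
  unfolding sym_invariant_def
proof (intro ballI)
  fix \<sigma> w
  assume \<sigma>: "\<sigma> \<in> Sym" and w: "w \<in> irreducibles M"
  have "a = 0 \<or> b = 0" if "a \<in> M" "b \<in> M" "act \<sigma> w = a + b" for a b
  proof -
    have "w = act (inv \<sigma>) a + act (inv \<sigma>) b"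
      using act_inv_act[OF \<sigma>, of w] by (simp add: that(3) act_add)
    moreover have "act (inv \<sigma>) a \<in> M" "act (inv \<sigma>) b \<in> M"
      using M Sym_inv[OF \<sigma>] that by (auto simp: sym_invariant_def)
    ultimately show ?thesis
      using w act_eq_0_iff[OF Sym_inv[OF \<sigma>]] by (auto simp: irreducibles_def)
  qed
  then show "act \<sigma> w \<in> irreducibles M"
    using w \<sigma> M by (auto simp: irreducibles_def sym_invariant_def act_eq_0_iff)
qed

definition positive_monoid :: "vec set \<Rightarrow> bool" where
  "positive_monoid M \<longleftrightarrow> 0 \<in> M \<and> (\<forall>a\<in>M. \<forall>b\<in>M. a + b \<in> M) \<and>
     (\<forall>w\<in>M. (\<forall>x. 0 \<le> w x) \<and> finite {x. w x \<noteq> 0})"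

definition weight :: "vec \<Rightarrow> nat" where
  "weight w = (\<Sum>x | w x \<noteq> 0. nat (w x))"

lemma weight_eq_sum:
  assumes "finite S" and "{x. w x \<noteq> 0} \<subseteq> S"
  shows "weight w = (\<Sum>x\<in>S. nat (w x))"
  unfolding weight_def using assms by (intro sum.mono_neutral_left) auto

lemma weight_add:
  assumes "\<forall>x. 0 \<le> a x" "finite {x. a x \<noteq> 0}" "\<forall>x. 0 \<le> b x" "finite {x. b x \<noteq> 0}"
  shows "weight (a + b) = weight a + weight b"
proof -
  let ?S = "{x. a x \<noteq> 0} \<union> {x. b x \<noteq> 0}"
  have fin: "finite ?S"
    using assms(2,4) by simp
  have "weight (a + b) = (\<Sum>x\<in>?S. nat ((a + b) x))"
    by (rule weight_eq_sum[OF fin]) auto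
  also have "\<dots> = (\<Sum>x\<in>?S. nat (a x)) + (\<Sum>x\<in>?S. nat (b x))"
    by (simp add: nat_add_distrib sum.distrib assms(1,3))
  also have "\<dots> = weight a + weight b"
    by (simp only: weight_eq_sum[OF fin Un_upper1] weight_eq_sum[OF fin Un_upper2])
  finally show ?thesis .
qed

lemma weight_pos:
  assumes "\<forall>x. 0 \<le> w x" "finite {x. w x \<noteq> 0}" "w \<noteq> 0"
  shows "0 < weight w"
proof -
  obtain x where x: "w x \<noteq> 0"
    using assms(3) by (auto simp: fun_eq_iff)
  then have "0 < nat (w x)"
    using assms(1) by (metis order_less_le zero_less_nat_eq)
  also have "nat (w x) \<le> weight w"
    unfolding weight_def by (rule member_le_sum) (use x assms(2) in auto)
  finally show ?thesis .
qed

lemma monoid_gen_mono: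
  assumes "A \<subseteq> B"
  shows "monoid_gen A \<subseteq> monoid_gen B"
proof
  fix x
  assume "x \<in> monoid_gen A"
  then show "x \<in> monoid_gen B"
  proof induction
    case zero
    show ?case
      by (rule monoid_gen.zero)
  next
    case (gen h)
    then show ?case
      using assms by (blast intro: monoid_gen.gen)
  next
    case (add a b)
    show ?case
      using add.IH by (rule monoid_gen.add)
  qed
qed

context
  fixes M :: "vec set"
  assumes M: "positive_monoid M"
begin

lemma monoid_gen_subset:
  assumes "K \<subseteq> M"
  shows "monoid_gen K \<subseteq> M"
proof
  fix x
  assume "x \<in> monoid_gen K"
  then show "x \<in> M"
  proof induction
    case zero
    show ?case
      using M by (simp add: positive_monoid_def zero_fun_def)
  next
    case (gen h)
    then show ?case
      using assms by blast
  next
    case (add a b)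
    show ?case
      using M add.IH unfolding positive_monoid_def by blast
  qed
qed

lemma irreducible_in_generators:
  assumes "K \<subseteq> M" and "w \<in> monoid_gen K" and "w \<in> irreducibles M"
  shows "w \<in> K"
  using assms(2,3)
proof (induction rule: monoid_gen.induct)
  case zero
  then show ?case
    by (simp add: irreducibles_def zero_fun_def[symmetric])
next
  case (gen h)
  then show ?case
    by simp
next
  case (add a b)
  have "a \<in> M" "b \<in> M"
    using add.hyps monoid_gen_subset[OF assms(1)] by blast+
  then have "a = 0 \<or> b = 0"
    using add.prems unfolding irreducibles_def by blast
  then show ?case
  proof
    assume "a = 0"
    then show ?case
      using add.prems add.IH(2) by simp
  next
    assume "b = 0"
    then show ?case
      using add.prems add.IH(1) by simp
  qed
qed

lemma monoid_gen_irreducibles: "monoid_gen (irreducibles M) = M"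
proof
  show "monoid_gen (irreducibles M) \<subseteq> M"
    by (rule monoid_gen_subset) (auto simp: irreducibles_def)
  have "w \<in> M \<longrightarrow> w \<in> monoid_gen (irreducibles M)" for w
  proof (induction w rule: measure_induct_rule[where f = weight])
    case (less w)
    show ?case
    proof
      assume w: "w \<in> M"
      consider "w = 0" | "w \<in> irreducibles M"
        | a b where "a \<in> M" "b \<in> M" "w = a + b" "a \<noteq> 0" "b \<noteq> 0"
        using w unfolding irreducibles_def by blast
      then show "w \<in> monoid_gen (irreducibles M)"
      proof cases
        case 1
        then show ?thesis
          using monoid_gen.zero by (simp add: zero_fun_def)
      next
        case 2
        then show ?thesis
          by (rule monoid_gen.gen)
      next
        case (3 a b)
        have "weight w = weight a + weight b" "0 < weight a" "0 < weight b"
          using 3 M by (auto simp: positive_monoid_def weight_add weight_pos)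
        then have "a \<in> monoid_gen (irreducibles M)" "b \<in> monoid_gen (irreducibles M)"
          using less 3 by auto
        then show ?thesis
          using 3 by (simp add: monoid_gen.add)
      qed
    qed
  qed
  then show "M \<subseteq> monoid_gen (irreducibles M)"
    by blast
qed

lemma hilbert_basis_iff_irreducibles: "hilbert_basis K M \<longleftrightarrow> K = irreducibles M"
proof
  assume K: "hilbert_basis K M"
  then have gen: "monoid_gen K = M"
    by (simp add: hilbert_basis_def)
  then have "K \<subseteq> M"
    using monoid_gen.gen by blast
  then have "irreducibles M \<subseteq> K"
    using irreducible_in_generators gen by (auto simp: irreducibles_def)
  moreover have "K \<subseteq> irreducibles M"
  proof (rule ccontr)
    assume "\<not> K \<subseteq> irreducibles M"
    then obtain k where "k \<in> K" "irreducibles M \<subseteq> K - {k}"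
      using \<open>irreducibles M \<subseteq> K\<close> by auto
    then have "monoid_gen (K - {k}) = M" "K - {k} \<subset> K"
      using monoid_gen_mono[of "irreducibles M" "K - {k}"] monoid_gen_mono[of "K - {k}" K]
      by (auto simp: monoid_gen_irreducibles gen)
    then show False
      using K by (auto simp: hilbert_basis_def)
  qed
  ultimately show "K = irreducibles M"
    by blast
next
  assume K: "K = irreducibles M"
  have "monoid_gen H \<noteq> M" if "H \<subset> K" for H
  proof
    assume "monoid_gen H = M"
    then have "K \<subseteq> H"
      using that K irreducible_in_generators[of H] by (auto simp: irreducibles_def)
    then show False
      using that by blast
  qed
  then show "hilbert_basis K M"
    using K by (simp add: hilbert_basis_def monoid_gen_irreducibles)
qed

end

section \<open>The monoid M and its irreducible elements\<close>

lemma Vec_add: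
  assumes "u \<in> Vec d k" and "v \<in> Vec d k"
  shows "u + v \<in> Vec d k"
proof -
  have "{x. (u + v) x \<noteq> 0} \<subseteq> {x. u x \<noteq> 0} \<union> {x. v x \<noteq> 0}"
    by auto
  then show ?thesis
    using assms unfolding Vec_def by (auto intro: finite_subset)
qed

lemma Vec_diff: "u \<in> Vec d k \<Longrightarrow> v \<in> Vec d k \<Longrightarrow> u - v \<in> Vec d k"
  using Vec_add[of u d k "- v"] by (simp add: Vec_def)

lemma Vec_vanishes: "w \<in> Vec d k \<Longrightarrow> x \<notin> Idx d k \<Longrightarrow> w x = 0"
  unfolding Vec_def by blast

lemma phi_add: "phi c (u + v) = phi c u + phi c v"
  by (auto simp: phi_def fun_eq_iff)

lemma phi_diff: "phi c (u - v) = phi c u - phi c v"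
  by (auto simp: phi_def fun_eq_iff)

lemma phi_zero: "phi c 0 = 0"
  by (auto simp: phi_def fun_eq_iff)

(* (g\<^sup>+, g\<^sup>-), the preimage of g under phi with disjoint supports in the two summands *)
definition posneg :: "nat \<Rightarrow> vec \<Rightarrow> vec" where
  "posneg c g = (\<lambda>(xs, j). if 1 \<le> j \<and> j \<le> c then max (g (xs, j)) 0
      else if c < j \<and> j \<le> 2 * c then max (- g (xs, j - c)) 0 else 0)"

definition diag :: "nat \<Rightarrow> idx \<Rightarrow> vec" where
  "diag c x = (\<lambda>y. if y = x \<or> y = (fst x, snd x + c) then 1 else 0)"

lemma posneg_nonneg: "0 \<le> posneg c g x"
  by (auto simp: posneg_def split: prod.splits)

lemma posneg_act: "posneg c (act \<sigma> g) = act \<sigma> (posneg c g)"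
  by (auto simp: posneg_def act_def fun_eq_iff)

lemma posneg_in_Vec:
  assumes g: "g \<in> Vec d c"
  shows "posneg c g \<in> Vec d (2 * c)"
proof -
  let ?S = "{x. g x \<noteq> 0}"
  have nz: "(xs, j) \<in> ?S \<and> 1 \<le> j \<and> j \<le> c \<or> (xs, j - c) \<in> ?S \<and> c < j \<and> j \<le> 2 * c"
    if "posneg c g (xs, j) \<noteq> 0" for xs j
    using that by (auto simp: posneg_def split: if_splits)
  have "{x. posneg c g x \<noteq> 0} \<subseteq> ?S \<union> (\<lambda>(xs, j). (xs, j + c)) ` ?S"
  proof
    fix x
    assume x: "x \<in> {x. posneg c g x \<noteq> 0}"
    obtain xs j where "x = (xs, j)"
      by (cases x)
    then show "x \<in> ?S \<union> (\<lambda>(xs, j). (xs, j + c)) ` ?S"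
      using x nz[of xs j] by (auto intro: image_eqI[of _ _ "(xs, j - c)"])
  qed
  moreover have "finite ?S"
    using g by (simp add: Vec_def)
  ultimately have "finite {x. posneg c g x \<noteq> 0}"
    by (auto intro: finite_subset)
  moreover have "(xs, j) \<in> Idx d (2 * c)" if "posneg c g (xs, j) \<noteq> 0" for xs j
    using nz[OF that] g by (auto simp: Vec_def Idx_def)
  ultimately show ?thesis
    by (auto simp: Vec_def)
qed

lemma phi_posneg:
  assumes "g \<in> Vec d c"
  shows "phi c (posneg c g) = g"
proof (rule ext, clarify)
  fix xs j
  show "phi c (posneg c g) (xs, j) = g (xs, j)"
  proof (cases "1 \<le> j \<and> j \<le> c")
    case True
    then show ?thesis
      by (auto simp: phi_def posneg_def)
  next
    case False
    then show ?thesis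
      using Vec_vanishes[OF assms, of "(xs, j)"] by (auto simp: phi_def Idx_def)
  qed
qed

lemma posneg_conf_split:
  assumes "v \<sqsubseteq> g"
  shows "posneg c g = posneg c v + posneg c (g - v)"
proof (rule ext, clarify)
  have between: "(0 \<le> v x \<and> v x \<le> g x) \<or> (g x \<le> v x \<and> v x \<le> 0)" for x
  proof -
    have "0 \<le> v x * g x" "\<bar>v x\<bar> \<le> \<bar>g x\<bar>"
      using assms unfolding conf_le_def by blast+
    then show ?thesis
      by (cases "0 \<le> g x"; cases "0 \<le> v x") (auto simp: zero_le_mult_iff)
  qed
  fix xs j
  show "posneg c g (xs, j) = (posneg c v + posneg c (g - v)) (xs, j)"
    using between[of "(xs, j)"] between[of "(xs, j - c)"] by (auto simp: posneg_def)
qed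

lemma eq_posneg_phi:
  assumes w: "w \<in> Vec d (2 * c)" "\<forall>x. 0 \<le> w x"
    and one_side: "\<And>xs j. 1 \<le> j \<Longrightarrow> j \<le> c \<Longrightarrow> w (xs, j) = 0 \<or> w (xs, j + c) = 0"
  shows "w = posneg c (phi c w)"
proof (rule ext, clarify)
  fix xs j
  consider "1 \<le> j" "j \<le> c" | "c < j" "j \<le> 2 * c" | "j < 1 \<or> 2 * c < j"
    by linarith
  then show "w (xs, j) = posneg c (phi c w) (xs, j)"
  proof cases
    case 1
    then show ?thesis
      using one_side[of j xs] w(2) by (auto simp: posneg_def phi_def)
  next
    case 2
    then have "1 \<le> j - c" "j - c \<le> c" "j - c + c = j"
      by auto
    then show ?thesis
      using one_side[of "j - c" xs] w(2) 2 by (auto simp: posneg_def phi_def)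
  next
    case 3
    then have "(xs, j) \<notin> Idx d (2 * c)"
      by (auto simp: Idx_def)
    then show ?thesis
      using Vec_vanishes[OF w(1)] 3 by (auto simp: posneg_def)
  qed
qed

lemma le_posneg_one_side:
  assumes "\<forall>x. 0 \<le> a x" and "\<forall>x. a x \<le> posneg c g x" and "1 \<le> j" and "j \<le> c"
  shows "a (xs, j) = 0 \<or> a (xs, j + c) = 0"
  using assms(1)[rule_format, of "(xs, j)"] assms(1)[rule_format, of "(xs, j + c)"] assms(3,4)
    assms(2)[rule_format, of "(xs, j)"] assms(2)[rule_format, of "(xs, j + c)"]
  by (auto simp: posneg_def max_def split: if_splits)

lemma le_posneg_phi_eq_0:
  assumes "a \<in> Vec d (2 * c)" and "\<forall>x. 0 \<le> a x" and "\<forall>x. a x \<le> posneg c g x"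
    and "phi c a = 0"
  shows "a = 0"
proof -
  have "a = posneg c (phi c a)"
    using assms le_posneg_one_side by (intro eq_posneg_phi) blast+
  then show ?thesis
    using assms(4) by (simp add: posneg_def fun_eq_iff)
qed

lemma le_posneg_conf_le:
  assumes "\<forall>x. 0 \<le> a x" and "\<forall>x. a x \<le> posneg c g x"
  shows "phi c a \<sqsubseteq> g"
  unfolding conf_le_def
proof (intro allI, clarify)
  fix xs j
  show "0 \<le> phi c a (xs, j) * g (xs, j) \<and> \<bar>phi c a (xs, j)\<bar> \<le> \<bar>g (xs, j)\<bar>"
  proof (cases "1 \<le> j \<and> j \<le> c")
    case True
    then have "a (xs, j) \<le> max (g (xs, j)) 0" "a (xs, j + c) \<le> max (- g (xs, j)) 0"
      using assms(2)[rule_format, of "(xs, j)"] assms(2)[rule_format, of "(xs, j + c)"]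
      by (auto simp: posneg_def)
    moreover have "0 \<le> a (xs, j)" "0 \<le> a (xs, j + c)"
      using assms(1) by auto
    ultimately show ?thesis
      using True by (auto simp: phi_def zero_le_mult_iff)
  next
    case False
    then show ?thesis
      by (auto simp: phi_def)
  qed
qed

lemma phi_diag: "1 \<le> snd x \<Longrightarrow> snd x \<le> c \<Longrightarrow> phi c (diag c x) = 0"
  by (auto simp: phi_def diag_def fun_eq_iff)

lemma diag_nonzero: "diag c x \<noteq> 0"
  by (auto simp: diag_def fun_eq_iff)

lemma diag_act:
  assumes "\<sigma> \<in> Sym"
  shows "act \<sigma> (diag c (xs, j)) = diag c (map \<sigma> xs, j)"
proof -
  have "\<sigma> \<circ> inv \<sigma> = id" "inv \<sigma> \<circ> \<sigma> = id"
    using Sym_bij[OF assms] by (simp_all add: bij_is_surj bij_is_inj flip: surj_iff inj_iff)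
  then have "map (inv \<sigma>) ys = xs \<longleftrightarrow> ys = map \<sigma> xs" for ys
    by (auto simp: map_map)
  then show ?thesis
    by (auto simp: act_def diag_def fun_eq_iff)
qed

lemma diag_in_Vec:
  assumes "x \<in> Idx d c"
  shows "diag c x \<in> Vec d (2 * c)"
proof -
  have "{y. diag c x y \<noteq> 0} \<subseteq> {x, (fst x, snd x + c)}"
    by (auto simp: diag_def)
  then show ?thesis
    using assms by (auto simp: Vec_def Idx_def diag_def intro: finite_subset split: if_splits)
qed

lemma graver_basis_iff:
  "g \<in> graver_basis L \<longleftrightarrow> g \<in> L \<and> g \<noteq> 0 \<and> (\<forall>v\<in>L. v \<noteq> 0 \<longrightarrow> v \<sqsubseteq> g \<longrightarrow> v = g)"
  by (auto simp: graver_basis_def zero_fun_def[symmetric])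

lemma sym_invariant_Mon:
  assumes "sym_invariant L"
  shows "sym_invariant (Mon d c L)"
  using assms unfolding sym_invariant_def Mon_def
  by (auto simp: act_in_Vec phi_act) (auto simp: act_def)

context
  fixes d c :: nat and L :: "vec set"
  assumes L: "lattice d c L"
begin

lemma lattice_zero: "0 \<in> L"
  and lattice_add: "u \<in> L \<Longrightarrow> v \<in> L \<Longrightarrow> u + v \<in> L"
  and lattice_diff: "u \<in> L \<Longrightarrow> v \<in> L \<Longrightarrow> u - v \<in> L"
  and lattice_Vec: "u \<in> L \<Longrightarrow> u \<in> Vec d c"
  using L unfolding lattice_def zero_fun_def
  by (auto simp: fun_eq_iff) (metis diff_conv_add_uminus)

lemma positive_monoid_Mon: "positive_monoid (Mon d c L)"
proof -
  have "0 \<in> Mon d c L"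
    using lattice_zero by (simp add: Mon_def Vec_def phi_zero)
  moreover have "a + b \<in> Mon d c L" if "a \<in> Mon d c L" "b \<in> Mon d c L" for a b
    using that by (simp add: Mon_def Vec_add phi_add lattice_add add_nonneg_nonneg)
  moreover have "(\<forall>x. 0 \<le> w x) \<and> finite {x. w x \<noteq> 0}" if "w \<in> Mon d c L" for w
    using that by (simp add: Mon_def Vec_def)
  ultimately show ?thesis
    by (simp add: positive_monoid_def)
qed

lemma posneg_in_Mon: "g \<in> L \<Longrightarrow> posneg c g \<in> Mon d c L"
  by (simp add: Mon_def posneg_in_Vec posneg_nonneg phi_posneg[OF lattice_Vec] lattice_Vec)

lemma diag_in_Mon:
  assumes x: "x \<in> Idx d c"
  shows "diag c x \<in> Mon d c L"
proof -
  have "phi c (diag c x) = 0"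
    using x by (intro phi_diag) (auto simp: Idx_def)
  moreover have "0 \<le> diag c x y" for y
    by (simp add: diag_def)
  ultimately show ?thesis
    by (simp add: Mon_def diag_in_Vec[OF x] lattice_zero)
qed

lemma irreducible_eq_diag:
  assumes w: "w \<in> irreducibles (Mon d c L)" and j: "1 \<le> j" "j \<le> c"
    and nz: "w (xs, j) \<noteq> 0" "w (xs, j + c) \<noteq> 0"
  shows "w = diag c (xs, j)" and "(xs, j) \<in> Idx d c"
proof -
  let ?D = "diag c (xs, j)"
  have wM: "w \<in> Vec d (2 * c)" "\<forall>x. 0 \<le> w x" "phi c w \<in> L"
    using w by (auto simp: irreducibles_def Mon_def)
  show x: "(xs, j) \<in> Idx d c"
    using Vec_vanishes[OF wM(1), of "(xs, j)"] nz j by (auto simp: Idx_def)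
  have "1 \<le> w (xs, j)" "1 \<le> w (xs, j + c)"
    using nz wM(2) by (metis int_one_le_iff_zero_less order_less_le)+
  then have "0 \<le> (w - ?D) y" for y
    using wM(2)[rule_format, of y] by (auto simp: diag_def)
  then have "w - ?D \<in> Mon d c L"
    using wM x j Vec_diff[OF wM(1) diag_in_Vec[OF x]]
    by (simp add: Mon_def phi_diff phi_diag)
  moreover have "w = ?D + (w - ?D)"
    by simp
  ultimately have "w - ?D = 0"
    using w diag_in_Mon[OF x] diag_nonzero by (auto simp: irreducibles_def)
  then show "w = ?D"
    by simp
qed

lemma irreducible_phi_eq_0:
  assumes w: "w \<in> irreducibles (Mon d c L)" and phi: "phi c w = 0"
  shows "\<exists>x\<in>Idx d c. w = diag c x"
proof -
  have wV: "w \<in> Vec d (2 * c)" and "w \<noteq> 0"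
    using w by (auto simp: irreducibles_def Mon_def)
  then obtain xs j where nz: "w (xs, j) \<noteq> 0"
    by (auto simp: fun_eq_iff)
  then have j: "1 \<le> j" "j \<le> 2 * c"
    using Vec_vanishes[OF wV, of "(xs, j)"] by (auto simp: Idx_def)
  have balanced: "w (xs, k) = w (xs, k + c)" if "1 \<le> k" "k \<le> c" for k
    using fun_cong[OF phi, of "(xs, k)"] that by (simp add: phi_def)
  obtain k where "1 \<le> k" "k \<le> c" "w (xs, k) \<noteq> 0" "w (xs, k + c) \<noteq> 0"
  proof (cases "j \<le> c")
    case True
    then show ?thesis
      using that[of j] j nz balanced[of j] by auto
  next
    case False
    then show ?thesis
      using that[of "j - c"] j nz balanced[of "j - c"] by auto
  qed
  then show ?thesis
    using irreducible_eq_diag[OF w] by blast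
qed

lemma irreducible_phi_neq_0:
  assumes w: "w \<in> irreducibles (Mon d c L)" and phi: "phi c w \<noteq> 0"
  shows "w = posneg c (phi c w)" and "phi c w \<in> graver_basis L"
proof -
  have wM: "w \<in> Vec d (2 * c)" "\<forall>x. 0 \<le> w x" "phi c w \<in> L"
    and irr: "\<And>a b. a \<in> Mon d c L \<Longrightarrow> b \<in> Mon d c L \<Longrightarrow> w = a + b \<Longrightarrow> a = 0 \<or> b = 0"
    using w by (auto simp: irreducibles_def Mon_def)
  have "w (xs, j) = 0 \<or> w (xs, j + c) = 0" if "1 \<le> j" "j \<le> c" for xs j
    using irreducible_eq_diag(1)[OF w that] phi phi_diag[of "(xs, j)" c] that by auto
  then show w_eq: "w = posneg c (phi c w)"
    using wM by (intro eq_posneg_phi) auto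
  have "v = phi c w" if v: "v \<in> L" "v \<noteq> 0" "v \<sqsubseteq> phi c w" for v
  proof -
    have "w = posneg c v + posneg c (phi c w - v)"
      using w_eq posneg_conf_split[OF v(3)] by simp
    then have "posneg c v = 0 \<or> posneg c (phi c w - v) = 0"
      using irr posneg_in_Mon lattice_diff v(1) wM(3) by blast
    then have "v = 0 \<or> phi c w - v = 0"
      using phi_posneg[OF lattice_Vec] lattice_diff v(1) wM(3)
      by (metis phi_zero)
    then show ?thesis
      using v(2) by simp
  qed
  then show "phi c w \<in> graver_basis L"
    using wM(3) phi by (simp add: graver_basis_iff)
qed

lemma posneg_graver_irreducible:
  assumes g: "g \<in> graver_basis L"
  shows "posneg c g \<in> irreducibles (Mon d c L)"
proof -
  have gL: "g \<in> L" and "g \<noteq> 0"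
    and minimal: "\<And>v. v \<in> L \<Longrightarrow> v \<noteq> 0 \<Longrightarrow> v \<sqsubseteq> g \<Longrightarrow> v = g"
    using g by (auto simp: graver_basis_iff)
  have phi_g: "phi c (posneg c g) = g"
    using phi_posneg[OF lattice_Vec[OF gL]] .
  have "a = 0 \<or> b = 0"
    if ab: "a \<in> Mon d c L" "b \<in> Mon d c L" "posneg c g = a + b" for a b
  proof -
    have a: "a \<in> Vec d (2 * c)" "\<forall>x. 0 \<le> a x" "phi c a \<in> L"
      and b: "b \<in> Vec d (2 * c)" "\<forall>x. 0 \<le> b x" "phi c b \<in> L"
      using ab(1,2) by (auto simp: Mon_def)
    have "\<forall>x. a x \<le> posneg c g x" "\<forall>x. b x \<le> posneg c g x"
      using ab(3) a(2) b(2) by (auto simp: fun_eq_iff)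
    note le = this
    have "phi c a + phi c b = g"
      using phi_g by (simp add: ab(3) phi_add)
    moreover have "phi c a = 0 \<or> phi c a = g"
      using minimal[OF a(3) _ le_posneg_conf_le[OF a(2) le(1)]] by blast
    ultimately have "phi c a = 0 \<or> phi c b = 0"
      by auto
    then show ?thesis
      using le_posneg_phi_eq_0[OF a(1,2) le(1)] le_posneg_phi_eq_0[OF b(1,2) le(2)] by blast
  qed
  moreover have "posneg c g \<noteq> 0"
    using phi_g \<open>g \<noteq> 0\<close> phi_zero by metis
  ultimately show ?thesis
    using posneg_in_Mon[OF gL] by (simp add: irreducibles_def)
qed

lemma graver_basis_eq_phi_irreducibles:
  "graver_basis L = phi c ` irreducibles (Mon d c L) - {0}"
proof (intro equalityI subsetI)
  fix g
  assume g: "g \<in> graver_basis L"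
  then have "g = phi c (posneg c g)" "g \<noteq> 0"
    using phi_posneg[OF lattice_Vec] by (auto simp: graver_basis_iff)
  then show "g \<in> phi c ` irreducibles (Mon d c L) - {0}"
    using posneg_graver_irreducible[OF g] by blast
next
  fix g
  assume "g \<in> phi c ` irreducibles (Mon d c L) - {0}"
  then show "g \<in> graver_basis L"
    using irreducible_phi_neq_0(2) by blast
qed

lemma irreducibles_Mon_eq:
  "irreducibles (Mon d c L) =
     posneg c ` graver_basis L \<union> (irreducibles (Mon d c L) \<inter> diag c ` Idx d c)"
proof (intro equalityI subsetI)
  fix w
  assume w: "w \<in> irreducibles (Mon d c L)"
  show "w \<in> posneg c ` graver_basis L \<union> (irreducibles (Mon d c L) \<inter> diag c ` Idx d c)"
  proof (cases "phi c w = 0")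
    case True
    then show ?thesis
      using irreducible_phi_eq_0[OF w] w by blast
  next
    case False
    then show ?thesis
      using irreducible_phi_neq_0[OF w] by blast
  qed
qed (auto intro: posneg_graver_irreducible)

end

section \<open>Orbits of diagonal elements\<close>

definition std_Idx :: "nat \<Rightarrow> nat \<Rightarrow> idx set" where
  "std_Idx d c = {(xs, j) \<in> Idx d c. set xs \<subseteq> {1..d}}"

lemma finite_std_Idx: "finite (std_Idx d c)"
proof -
  have "std_Idx d c \<subseteq> {xs. set xs \<subseteq> {1..d} \<and> length xs = d} \<times> {1..c}"
    by (auto simp: std_Idx_def Idx_def)
  then show ?thesis
    by (rule finite_subset) (simp add: finite_lists_length_eq)
qed

lemma Sym_map_in_Idx: "\<sigma> \<in> Sym \<Longrightarrow> (xs, j) \<in> Idx d c \<Longrightarrow> (map \<sigma> xs, j) \<in> Idx d c"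
  using Sym_pos[of \<sigma>] by (auto simp: Idx_def)

lemma Idx_move_into_std_Idx:
  assumes "(xs, j) \<in> Idx d c"
  obtains \<sigma> where "\<sigma> \<in> Sym" and "(map \<sigma> xs, j) \<in> std_Idx d c"
proof -
  obtain \<sigma> where "\<sigma> \<in> Sym" "\<sigma> ` set xs \<subseteq> {1..length xs}"
    using assms Sym_move_into_interval[of xs] by (auto simp: Idx_def)
  then show ?thesis
    using that assms Sym_map_in_Idx[of \<sigma> xs j d c] by (auto simp: std_Idx_def Idx_def)
qed

lemma orbit_diag_std_Idx:
  assumes S: "sym_invariant S"
  shows "orbit (S \<inter> diag c ` std_Idx d c) = S \<inter> diag c ` Idx d c"
proof (intro equalityI subsetI)
  fix w
  assume "w \<in> orbit (S \<inter> diag c ` std_Idx d c)"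
  then obtain \<sigma> xs j where \<sigma>: "\<sigma> \<in> Sym" and x: "(xs, j) \<in> std_Idx d c"
    and "diag c (xs, j) \<in> S" and w: "w = act \<sigma> (diag c (xs, j))"
    by (auto simp: orbit_def)
  then have "w \<in> S"
    using S by (simp add: sym_invariant_def)
  moreover have "w = diag c (map \<sigma> xs, j)" "(map \<sigma> xs, j) \<in> Idx d c"
    using diag_act[OF \<sigma>] w Sym_map_in_Idx[OF \<sigma>] x by (auto simp: std_Idx_def)
  ultimately show "w \<in> S \<inter> diag c ` Idx d c"
    by blast
next
  fix w
  assume "w \<in> S \<inter> diag c ` Idx d c"
  then obtain xs j where "w \<in> S" and x: "(xs, j) \<in> Idx d c" and w: "w = diag c (xs, j)"
    by auto
  obtain \<sigma> where \<sigma>: "\<sigma> \<in> Sym" and std: "(map \<sigma> xs, j) \<in> std_Idx d c"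
    using Idx_move_into_std_Idx[OF x] .
  have "act \<sigma> w \<in> S"
    using S \<sigma> \<open>w \<in> S\<close> by (simp add: sym_invariant_def)
  moreover have "act \<sigma> w = diag c (map \<sigma> xs, j)"
    using diag_act[OF \<sigma>] w by simp
  ultimately have "act \<sigma> w \<in> S \<inter> diag c ` std_Idx d c"
    using std by blast
  moreover have "w = act (inv \<sigma>) (act \<sigma> w)"
    using act_inv_act[OF \<sigma>] by simp
  ultimately show "w \<in> orbit (S \<inter> diag c ` std_Idx d c)"
    using Sym_inv[OF \<sigma>] by (auto simp: orbit_def)
qed

context
  fixes d c :: nat and L :: "vec set"
  assumes L: "lattice d c L"
begin

lemma equivariant_hilbert_basis_Mon_iff:
  "equivariant_hilbert_basis H (Mon d c L) \<longleftrightarrow> orbit H = irreducibles (Mon d c L)"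
  unfolding equivariant_hilbert_basis_def
  by (rule hilbert_basis_iff_irreducibles[OF positive_monoid_Mon[OF L]])

lemma equivariant_graver_basis_phi:
  assumes "equivariant_hilbert_basis H (Mon d c L)"
  shows "equivariant_graver_basis (phi c ` H - {0}) L"
proof -
  have "orbit (phi c ` H - {0}) = phi c ` irreducibles (Mon d c L) - {0}"
    using assms by (simp only: equivariant_hilbert_basis_Mon_iff orbit_Diff_zero orbit_image[OF phi_act])
  also have "\<dots> = graver_basis L"
    by (rule graver_basis_eq_phi_irreducibles[OF L, symmetric])
  finally show ?thesis
    unfolding equivariant_graver_basis_def .
qed

lemma equivariant_hilbert_basis_posneg:
  assumes "sym_invariant L" and "equivariant_graver_basis G L"
  shows "equivariant_hilbert_basis
           (posneg c ` G \<union> (irreducibles (Mon d c L) \<inter> diag c ` std_Idx d c)) (Mon d c L)"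
proof -
  have "sym_invariant (irreducibles (Mon d c L))"
    by (rule sym_invariant_irreducibles[OF sym_invariant_Mon[OF assms(1)]])
  then have "orbit (posneg c ` G \<union> (irreducibles (Mon d c L) \<inter> diag c ` std_Idx d c)) =
      posneg c ` graver_basis L \<union> (irreducibles (Mon d c L) \<inter> diag c ` Idx d c)"
    using assms(2) unfolding equivariant_graver_basis_def
    by (simp only: orbit_Un orbit_image[OF posneg_act] orbit_diag_std_Idx)
  also have "\<dots> = irreducibles (Mon d c L)"
    by (rule irreducibles_Mon_eq[OF L, symmetric])
  finally show ?thesis
    by (simp only: equivariant_hilbert_basis_Mon_iff)
qed

end

theorem corollary4p12:
  fixes c d :: nat and L :: "vec set"
  assumes "1 \<le> c" and "1 \<le> d"
    and "lattice d c L" and "sym_invariant L"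
  shows "(\<exists>H. finite H \<and> equivariant_hilbert_basis H (Mon d c L)) \<longleftrightarrow>
         (\<exists>G. finite G \<and> equivariant_graver_basis G L)"
proof
  assume "\<exists>H. finite H \<and> equivariant_hilbert_basis H (Mon d c L)"
  then obtain H where "finite H" and "equivariant_hilbert_basis H (Mon d c L)"
    by blast
  then have "finite (phi c ` H - {0})" and "equivariant_graver_basis (phi c ` H - {0}) L"
    using equivariant_graver_basis_phi[OF assms(3)] by simp_all
  then show "\<exists>G. finite G \<and> equivariant_graver_basis G L"
    by blast
next
  assume "\<exists>G. finite G \<and> equivariant_graver_basis G L"
  then obtain G where "finite G" and "equivariant_graver_basis G L"
    by blast
  moreover have "finite (irreducibles (Mon d c L) \<inter> diag c ` std_Idx d c)"
    using finite_std_Idx by (simp add: finite_Int)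
  ultimately show "\<exists>H. finite H \<and> equivariant_hilbert_basis H (Mon d c L)"
    using equivariant_hilbert_basis_posneg[OF assms(3,4)]
    by (intro exI[of _ "posneg c ` G \<union> (irreducibles (Mon d c L) \<inter> diag c ` std_Idx d c)"]) simp
qed

end
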